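(* Let $\{\alpha_{i,j,k}\}_{1\le i,j,k\le d}$ be real numbers invariant under all permutations of the three indices, let $A_k:=(\alpha_{k,r,s})_{1\le r,s\le d}$ for $k=1,\dots,d$, and fix $i,j\in\{1,\dots,d\}$ with $C_{i,j}:=A_iA_j-A_jA_i$. Then the following are equivalent: (a) $(C_{i,j}\mathbf t)\cdot\big((I-t_1A_1-\cdots-t_dA_d)^{-1}\mathbf t\big)=0$ for all $\mathbf t$ in a neighborhood of $\mathbf 0\in\mathbb R^d$; (b) $(C_{i,j}\mathbf t)\cdot\big((t_1A_1+\cdots+t_dA_d)^n\mathbf t\big)=0$ for all $n\in\mathbb N$ and all $\mathbf t\in\mathbb R^d$; (c) $(C_{i,j}\mathbf t)\cdot\big((t_1A_1+\cdots+t_dA_d)^n\mathbf t\big)=0$ for all $1\le n\le d-1$ and all $\mathbf t\in\mathbb R^d$.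
   Context: $I$ denotes the $d\times d$ identity matrix and $\cdot$ the standard inner product on $\mathbb R^d$. *)

theory Defs
  imports "HOL-Analysis.Analysis"
begin

text \<open>Matrix power (the library power on vec is componentwise, so we define it).\<close>
primrec matpow :: "real^'n^'n \<Rightarrow> nat \<Rightarrow> real^'n^'n" where
  "matpow M 0 = mat 1"
| "matpow M (Suc k) = M ** matpow M k"

definition Amat :: "('n \<Rightarrow> 'n \<Rightarrow> 'n \<Rightarrow> real) \<Rightarrow> 'n \<Rightarrow> real^'n^'n" where
  "Amat \<alpha> k = (\<chi> r s. \<alpha> k r s)"

definition Tmat :: "('n \<Rightarrow> 'n \<Rightarrow> 'n \<Rightarrow> real) \<Rightarrow> real^'n \<Rightarrow> real^'n^'n" where
  "Tmat \<alpha> t = (\<Sum>k\<in>UNIV. t $ k *\<^sub>R Amat \<alpha> k)"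

end

theory Submission
  imports Defs
begin

text \<open>Write \<open>T t = t\<^sub>1 A\<^sub>1 + \<dots> + t\<^sub>d A\<^sub>d\<close>. For small \<open>t\<close> the Neumann series expands
  \<open>(C t) \<bullet> ((I - T t)\<^sup>-\<^sup>1 t)\<close> as \<open>\<Sum>\<^sub>n (C t) \<bullet> ((T t)\<^sup>n t)\<close>, whose \<open>n\<close>-th term is homogeneous of
  degree \<open>n + 2\<close> in \<open>t\<close>. On the line \<open>s t\<close> condition (a) therefore says that a real power
  series in \<open>s\<close> vanishes near \<open>0\<close>, so all its coefficients vanish: this is (a) \<open>\<longleftrightarrow>\<close> (b).
  For (b) \<open>\<longleftrightarrow>\<close> (c), every Krylov vector \<open>(T t)\<^sup>n t\<close> lies in the span of the first \<open>d\<close> of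
  them, and the term \<open>n = 0\<close> vanishes because the commutator of the symmetric matrices
  \<open>A\<^sub>i\<close>, \<open>A\<^sub>j\<close> is skew-symmetric.\<close>

lemma matrix_inv_left:
  fixes A :: "'a::semiring_1^'n^'m"
  assumes "invertible A"
  shows "matrix_inv A ** A = mat 1"
  using assms unfolding invertible_def matrix_inv_def by (rule someI2_ex) blast

lemma matpow_scaleR: "matpow (c *\<^sub>R M) n = c ^ n *\<^sub>R matpow M n"
  by (induction n) (simp_all add: matrix_matrix_mult_def vec_eq_iff sum_distrib_left mult_ac)

lemma norm_matpow_mult_vec_le:
  fixes M :: "real^'n^'n"
  assumes "0 \<le> q" and "\<And>x. norm (M *v x) \<le> q * norm x"
  shows "norm (matpow M n *v x) \<le> q ^ n * norm x"
proof (induction n)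
  case (Suc n)
  have "norm (matpow M (Suc n) *v x) \<le> q * norm (matpow M n *v x)"
    using assms(2)[of "matpow M n *v x"] by (simp add: matrix_vector_mul_assoc)
  also have "\<dots> \<le> q * (q ^ n * norm x)"
    using Suc.IH assms(1) by (rule mult_left_mono)
  finally show ?case by (simp add: mult.assoc)
qed simp

lemma invertible_one_minus_contraction:
  fixes M :: "real^'n^'n"
  assumes "q < 1" and "\<And>x. norm (M *v x) \<le> q * norm x"
  shows "invertible (mat 1 - M)"
  unfolding invertible_left_inverse matrix_left_invertible_ker
proof (intro allI impI)
  fix x assume "(mat 1 - M) *v x = 0"
  then have "norm x \<le> q * norm x"
    using assms(2)[of x] by (simp add: matrix_vector_mult_diff_rdistrib)
  with \<open>q < 1\<close> show "x = 0"
    using mult_right_less_imp_less[of 1 "norm x" q] by fastforce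
qed

lemma one_minus_mult_sum_matpow:
  "(mat 1 - M) *v (\<Sum>m<k. matpow M m *v x) = x - matpow M k *v x"
  by (induction k) (simp_all add: matrix_vector_right_distrib matrix_vector_mult_diff_rdistrib
      flip: matrix_vector_mul_assoc)

lemma neumann_series_sums:
  fixes M :: "real^'n^'n"
  assumes "0 \<le> q" "q < 1" and contraction: "\<And>x. norm (M *v x) \<le> q * norm x"
  shows "(\<lambda>m. matpow M m *v x) sums (matrix_inv (mat 1 - M) *v x)"
proof -
  define N where "N = matrix_inv (mat 1 - M)"
  have N: "N ** (mat 1 - M) = mat 1"
    unfolding N_def by (rule matrix_inv_left invertible_one_minus_contraction assms)+
  have partial_sums: "(\<Sum>m<k. matpow M m *v x) = N *v (x - matpow M k *v x)" for k
    by (metis N one_minus_mult_sum_matpow matrix_vector_mul_assoc matrix_vector_mul_lid)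
  have "(\<lambda>k. matpow M k *v x) \<longlonglongrightarrow> 0"
  proof (rule tendsto_norm_zero_cancel, rule Lim_null_comparison)
    show "\<forall>\<^sub>F k in sequentially. norm (norm (matpow M k *v x)) \<le> q ^ k * norm x"
      using norm_matpow_mult_vec_le[OF assms(1) contraction] by simp
    show "(\<lambda>k. q ^ k * norm x) \<longlonglongrightarrow> 0"
      using assms by (intro tendsto_mult_left_zero LIMSEQ_power_zero) auto
  qed
  then have "(\<lambda>k. N *v (x - matpow M k *v x)) \<longlonglongrightarrow> N *v (x - 0)"
    by (intro bounded_linear.tendsto[OF matrix_vector_mul_bounded_linear] tendsto_intros)
  then show ?thesis
    unfolding sums_def partial_sums N_def by simp
qed

lemma powser_eq_0_imp_coeff_eq_0:
  fixes a :: "nat \<Rightarrow> 'a::{real_normed_field,banach}"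
  assumes "0 < r"
    and sums_0: "\<And>x. x \<noteq> 0 \<Longrightarrow> norm x < r \<Longrightarrow> (\<lambda>m. a m * x ^ m) sums 0"
  shows "a n = 0"
proof (induction n rule: less_induct)
  case (less n)
  have "(\<lambda>m. a (m + n) * x ^ m) sums 0" if "x \<noteq> 0" "norm x < r" for x
  proof -
    have "(\<lambda>m. a (m + n) * x ^ (m + n)) sums 0"
      using sums_0[OF that] less.IH by (simp add: sums_iff_shift[where f="\<lambda>m. a m * x ^ m"])
    then have "(\<lambda>m. x ^ n * (a (m + n) * x ^ m)) sums 0"
      by (simp add: power_add mult_ac)
    with \<open>x \<noteq> 0\<close> show ?thesis
      using sums_mult_D by fastforce
  qed
  then have "((\<lambda>_. 0) \<longlongrightarrow> a n) (at (0::'a))"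
    using powser_limit_0_strong[OF \<open>0 < r\<close>, of "\<lambda>m. a (m + n)"] by simp
  then show ?case
    by (auto dest: LIM_const_eq)
qed

lemma exists_in_span_of_predecessors:
  fixes v :: "nat \<Rightarrow> 'a::euclidean_space"
  shows "\<exists>k \<le> DIM('a). v k \<in> span (v ` {..<k})"
proof (rule ccontr)
  assume "\<not> ?thesis"
  then have "dim (v ` {..<k}) = k" if "k \<le> Suc DIM('a)" for k
    using that by (induction k) (auto simp: lessThan_Suc dim_insert)
  then show False
    using dim_subset_UNIV[of "v ` {..<Suc DIM('a)}"] by simp
qed

lemma matpow_mult_vec_in_span_if_in_span:
  fixes T :: "real^'n^'n"
  assumes "matpow T k *v x \<in> span ((\<lambda>m. matpow T m *v x) ` {..<k})"
  shows "matpow T n *v x \<in> span ((\<lambda>m. matpow T m *v x) ` {..<k})"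
proof -
  define K where "K = span ((\<lambda>m. matpow T m *v x) ` {..<k})"
  have "T *v (matpow T m *v x) \<in> K" if "m < k" for m
  proof (cases "Suc m = k")
    case True
    then show ?thesis
      using assms by (simp add: K_def matrix_vector_mul_assoc flip: True)
  next
    case False
    with that have "Suc m \<in> {..<k}"
      by simp
    moreover have "T *v (matpow T m *v x) = matpow T (Suc m) *v x"
      by (simp add: matrix_vector_mul_assoc)
    ultimately show ?thesis
      unfolding K_def by (metis imageI span_base)
  qed
  then have "(*v) T ` (\<lambda>m. matpow T m *v x) ` {..<k} \<subseteq> K"
    by auto
  then have invariant: "(*v) T ` K \<subseteq> K"
    unfolding K_def span_linear_image[OF matrix_vector_mul_linear, symmetric]
    by (simp add: span_minimal)
  show ?thesis
  proof (induction n)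
    case 0
    show ?case
    proof (cases k)
      case 0
      then show ?thesis
        using assms by simp
    next
      case (Suc k')
      then have "0 \<in> {..<k}"
        by simp
      then show ?thesis
        by (rule span_base[OF imageI])
    qed
  next
    case (Suc n)
    then show ?case
      using invariant unfolding K_def by (auto simp: matrix_vector_mul_assoc)
  qed
qed

lemma matpow_mult_vec_in_span:
  fixes T :: "real^'n^'n"
  shows "matpow T n *v x \<in> span ((\<lambda>m. matpow T m *v x) ` {..<CARD('n)})"
proof -
  obtain k where "k \<le> CARD('n)"
    and dependent: "matpow T k *v x \<in> span ((\<lambda>m. matpow T m *v x) ` {..<k})"
    using exists_in_span_of_predecessors[of "\<lambda>m. matpow T m *v x"] by auto
  from dependent have "matpow T n *v x \<in> span ((\<lambda>m. matpow T m *v x) ` {..<k})"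
    by (rule matpow_mult_vec_in_span_if_in_span)
  also have "\<dots> \<subseteq> span ((\<lambda>m. matpow T m *v x) ` {..<CARD('n)})"
    using \<open>k \<le> CARD('n)\<close> by (intro span_mono image_mono) auto
  finally show ?thesis .
qed

lemma inner_matpow_mult_vec_eq_0:
  fixes T :: "real^'n^'n"
  assumes "\<And>m. m < CARD('n) \<Longrightarrow> y \<bullet> (matpow T m *v x) = 0"
  shows "y \<bullet> (matpow T n *v x) = 0"
  by (rule linear_eq_0_on_span[OF bounded_linear.linear[OF bounded_linear_inner_right]
        _ matpow_mult_vec_in_span]) (use assms in auto)

lemma inner_mult_vec_self_eq_0_if_skew:
  fixes C :: "real^'n^'n"
  assumes "transpose C = - C"
  shows "(C *v x) \<bullet> x = 0"
proof -
  have "(C *v x) \<bullet> x = (x v* C) \<bullet> x"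
    by (simp only: dot_lmul_matrix inner_commute[of "C *v x" x])
  also have "\<dots> = (transpose C *v x) \<bullet> x"
    by simp
  also have "\<dots> = - ((C *v x) \<bullet> x)"
    using matrix_vector_mult_diff_rdistrib[of 0 C x] by (simp add: assms)
  finally show ?thesis
    by simp
qed

lemma transpose_commutator_if_symmetric:
  fixes A B :: "'a::comm_ring_1^'n^'n"
  assumes "transpose A = A" and "transpose B = B"
  shows "transpose (A ** B - B ** A) = - (A ** B - B ** A)"
proof -
  have "transpose (A ** B - B ** A) = transpose (A ** B) - transpose (B ** A)"
    by (simp add: transpose_def vec_eq_iff)
  also have "\<dots> = B ** A - A ** B"
    by (simp add: matrix_transpose_mul assms)
  finally show ?thesis
    by simp
qed

lemma transpose_Amat:
  assumes "\<And>r s. \<alpha> k r s = \<alpha> k s r"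
  shows "transpose (Amat \<alpha> k) = Amat \<alpha> k"
  using assms by (simp add: transpose_def Amat_def vec_eq_iff)

lemma linear_Tmat: "linear (Tmat \<alpha>)"
  by (intro linearI) (simp_all add: Tmat_def scaleR_add_left sum.distrib scaleR_sum_right)

lemma resolvent_form_sums:
  fixes T :: "real^'m \<Rightarrow> real^'n^'n"
  assumes "linear T"
  obtains r where "r > 0" and "\<And>t x y. norm t < r \<Longrightarrow>
    (\<lambda>n. y \<bullet> (matpow (T t) n *v x)) sums (y \<bullet> (matrix_inv (mat 1 - T t) *v x))"
proof -
  have "bilinear (\<lambda>t x. T t *v x)"
    unfolding bilinear_def
    using linear_add[OF assms] linear_scale[OF assms]
    by (auto intro!: linearI simp: matrix_vector_mult_add_rdistrib matrix_vector_right_distrib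
        scaleR_matrix_vector_assoc matrix_scaleR_vector_ac)
  then obtain B where "B > 0" and B: "\<And>t x. norm (T t *v x) \<le> B * norm t * norm x"
    using bilinear_bounded_pos by blast
  show thesis
  proof (rule that)
    show "1 / B > 0"
      using \<open>B > 0\<close> by simp
    fix t :: "real^'m" and x y :: "real^'n"
    assume "norm t < 1 / B"
    then have "B * norm t < 1"
      using \<open>B > 0\<close> by (simp add: field_simps)
    moreover have "norm (T t *v z) \<le> (B * norm t) * norm z" for z
      using B by simp
    ultimately have "(\<lambda>n. matpow (T t) n *v x) sums (matrix_inv (mat 1 - T t) *v x)"
      using \<open>B > 0\<close> by (intro neumann_series_sums) auto
    then show "(\<lambda>n. y \<bullet> (matpow (T t) n *v x)) sums (y \<bullet> (matrix_inv (mat 1 - T t) *v x))"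
      by (rule bounded_linear.sums[OF bounded_linear_inner_right])
  qed
qed

lemma inner_matpow_mult_vec_scaleR:
  fixes T :: "real^'n \<Rightarrow> real^'n^'n"
  assumes "linear T"
  shows "(C *v (s *\<^sub>R t)) \<bullet> (matpow (T (s *\<^sub>R t)) n *v (s *\<^sub>R t))
    = s\<^sup>2 * ((C *v t) \<bullet> (matpow (T t) n *v t) * s ^ n)"
proof -
  have "matpow (T (s *\<^sub>R t)) n *v (s *\<^sub>R t) = (s * s ^ n) *\<^sub>R (matpow (T t) n *v t)"
    by (simp only: linear_scale[OF assms] matpow_scaleR matrix_vector_mult_scaleR
        scaleR_matrix_vector_assoc[symmetric] scaleR_scaleR)
  then show ?thesis
    by (simp add: matrix_vector_mult_scaleR power2_eq_square mult_ac)
qed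

lemma resolvent_form_coeffs_eq_0:
  fixes T :: "real^'n \<Rightarrow> real^'n^'n" and C :: "real^'n^'n"
  assumes "linear T"
    and "\<forall>\<^sub>F t in nhds 0. (C *v t) \<bullet> (matrix_inv (mat 1 - T t) *v t) = 0"
  shows "(C *v t) \<bullet> (matpow (T t) n *v t) = 0"
proof (cases "t = 0")
  case False
  obtain r where "r > 0" and r: "\<And>t x y. norm t < r \<Longrightarrow>
    (\<lambda>n. y \<bullet> (matpow (T t) n *v x)) sums (y \<bullet> (matrix_inv (mat 1 - T t) *v x))"
    using resolvent_form_sums[OF assms(1)] by blast
  obtain e where "e > 0"
    and e: "\<And>t. norm t < e \<Longrightarrow> (C *v t) \<bullet> (matrix_inv (mat 1 - T t) *v t) = 0"
    using assms(2) by (auto simp: eventually_nhds_metric dist_norm)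
  have "(\<lambda>m. (C *v t) \<bullet> (matpow (T t) m *v t) * s ^ m) sums 0"
    if "s \<noteq> 0" and "norm s < min r e / norm t" for s :: real
  proof -
    have "norm (s *\<^sub>R t) < min r e"
      using that False by (simp add: pos_less_divide_eq)
    then have "norm (s *\<^sub>R t) < r" and "norm (s *\<^sub>R t) < e"
      by simp_all
    then have "(\<lambda>m. (C *v (s *\<^sub>R t)) \<bullet> (matpow (T (s *\<^sub>R t)) m *v (s *\<^sub>R t))) sums
        ((C *v (s *\<^sub>R t)) \<bullet> (matrix_inv (mat 1 - T (s *\<^sub>R t)) *v (s *\<^sub>R t)))"
      and "(C *v (s *\<^sub>R t)) \<bullet> (matrix_inv (mat 1 - T (s *\<^sub>R t)) *v (s *\<^sub>R t)) = 0"
      by (auto intro: r e)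
    then have "(\<lambda>m. s\<^sup>2 * ((C *v t) \<bullet> (matpow (T t) m *v t) * s ^ m)) sums 0"
      by (simp only: inner_matpow_mult_vec_scaleR[OF assms(1)])
    with \<open>s \<noteq> 0\<close> show ?thesis
      using sums_mult_D by fastforce
  qed
  then show ?thesis
    using \<open>r > 0\<close> \<open>e > 0\<close> False
    by (intro powser_eq_0_imp_coeff_eq_0[where r="min r e / norm t"]) auto
qed simp

lemma eventually_resolvent_form_eq_0_iff:
  fixes T :: "real^'n \<Rightarrow> real^'n^'n" and C :: "real^'n^'n"
  assumes "linear T"
  shows "(\<forall>\<^sub>F t in nhds 0. (C *v t) \<bullet> (matrix_inv (mat 1 - T t) *v t) = 0)
    \<longleftrightarrow> (\<forall>n t. (C *v t) \<bullet> (matpow (T t) n *v t) = 0)"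
proof
  show "\<forall>n t. (C *v t) \<bullet> (matpow (T t) n *v t) = 0"
    if "\<forall>\<^sub>F t in nhds 0. (C *v t) \<bullet> (matrix_inv (mat 1 - T t) *v t) = 0"
    using resolvent_form_coeffs_eq_0[OF assms that] by blast
next
  assume coeffs: "\<forall>n t. (C *v t) \<bullet> (matpow (T t) n *v t) = 0"
  obtain r where "r > 0" and r: "\<And>t x y. norm t < r \<Longrightarrow>
    (\<lambda>n. y \<bullet> (matpow (T t) n *v x)) sums (y \<bullet> (matrix_inv (mat 1 - T t) *v x))"
    using resolvent_form_sums[OF assms] by blast
  have "(C *v t) \<bullet> (matrix_inv (mat 1 - T t) *v t) = 0" if "norm t < r" for t
  proof -
    have "(\<lambda>n. 0) sums ((C *v t) \<bullet> (matrix_inv (mat 1 - T t) *v t))"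
      using r[where x=t and y="C *v t", OF that] coeffs by simp
    then show ?thesis
      using sums_unique2 sums_zero by metis
  qed
  with \<open>r > 0\<close> show "\<forall>\<^sub>F t in nhds 0. (C *v t) \<bullet> (matrix_inv (mat 1 - T t) *v t) = 0"
    by (auto simp: eventually_nhds_metric dist_norm)
qed

theorem mainTheorem8:
  fixes \<alpha> :: "'n::finite \<Rightarrow> 'n \<Rightarrow> 'n \<Rightarrow> real" and i j :: 'n
  assumes sym: "\<And>a b c. \<alpha> a b c = \<alpha> a c b \<and> \<alpha> a b c = \<alpha> b a c \<and> \<alpha> a b c = \<alpha> b c a
                  \<and> \<alpha> a b c = \<alpha> c a b \<and> \<alpha> a b c = \<alpha> c b a"
  defines "C \<equiv> Amat \<alpha> i ** Amat \<alpha> j - Amat \<alpha> j ** Amat \<alpha> i"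
  shows "((\<forall>\<^sub>F t in nhds 0. (C *v t) \<bullet> (matrix_inv (mat 1 - Tmat \<alpha> t) *v t) = 0)
          \<longleftrightarrow> (\<forall>n::nat. \<forall>t. (C *v t) \<bullet> (matpow (Tmat \<alpha> t) n *v t) = 0))
       \<and> ((\<forall>n::nat. \<forall>t. (C *v t) \<bullet> (matpow (Tmat \<alpha> t) n *v t) = 0)
          \<longleftrightarrow> (\<forall>n::nat. 1 \<le> n \<and> n \<le> CARD('n) - 1 \<longrightarrow>
                 (\<forall>t. (C *v t) \<bullet> (matpow (Tmat \<alpha> t) n *v t) = 0)))"
proof -
  have "\<alpha> k r s = \<alpha> k s r" for k r s
    using sym by blast
  then have "transpose C = - C"
    unfolding C_def by (intro transpose_commutator_if_symmetric transpose_Amat)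
  then have zeroth: "(C *v t) \<bullet> (matpow (Tmat \<alpha> t) 0 *v t) = 0" for t
    by (simp add: inner_mult_vec_self_eq_0_if_skew)
  have "(\<forall>n t. (C *v t) \<bullet> (matpow (Tmat \<alpha> t) n *v t) = 0)
    \<longleftrightarrow> (\<forall>n. 1 \<le> n \<and> n \<le> CARD('n) - 1 \<longrightarrow>
          (\<forall>t. (C *v t) \<bullet> (matpow (Tmat \<alpha> t) n *v t) = 0))"
  proof
    assume low: "\<forall>n. 1 \<le> n \<and> n \<le> CARD('n) - 1 \<longrightarrow>
      (\<forall>t. (C *v t) \<bullet> (matpow (Tmat \<alpha> t) n *v t) = 0)"
    have "(C *v t) \<bullet> (matpow (Tmat \<alpha> t) m *v t) = 0" if "m < CARD('n)" for m t
      using low zeroth that by (cases "m = 0") auto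
    then show "\<forall>n t. (C *v t) \<bullet> (matpow (Tmat \<alpha> t) n *v t) = 0"
      by (auto intro: inner_matpow_mult_vec_eq_0)
  qed auto
  with eventually_resolvent_form_eq_0_iff[OF linear_Tmat, where C=C] show ?thesis
    by (intro conjI)
qed

end
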